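(* Let $\mathbb{F}\in\{\mathbb{R},\mathbb{C}\}$ and let $A$ be an $\ell\times\ell$ matrix over $\mathbb{F}$ whose minimal polynomial equals its characteristic polynomial. Then there is an $\ell\times\ell\times2$ tensor $T$ over $\mathbb{F}$ of rank at most $1$ such that $(E_\ell;A)-T$ is diagonalizable over $\mathbb{F}$. In particular $\mathrm{rank}_{\mathbb{F}}(E_\ell;A)\le \ell+1$.
   Context: For matrices $A,B$ of the same size $m\times n$, $(A;B)$ denotes the $m\times n\times 2$ tensor with slices $A,B$; tensors are added slicewise. A rank-one tensor over $\mathbb{F}$ has the form $(\alpha\,\mathbf{a}\mathbf{b}^T;\beta\,\mathbf{a}\mathbf{b}^T)$ with nonzero $\mathbf{a},\mathbf{b}$ and $(\alpha,\beta)\neq0$; $\mathrm{rank}_{\mathbb{F}}(T)$ is the minimal number of rank-one tensors summing to $T$. $E_\ell$ is the $\ell\times\ell$ identity. An $m\times n\times 2$ tensor $(A;B)$ is diagonalizable over $\mathbb{F}$ if there are nonsingular $P,Q$ over $\mathbb{F}$ and diagonal $D_A,D_B$ with $PAQ=(D_A,O)$, $PBQ=(D_B,O)$ if $m\le n$, and $PAQ=(D_A,O)^T$, $PBQ=(D_B,O)^T$ if $m>n$. *)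

theory Defs
  imports "Jordan_Normal_Form.Matrix" "Jordan_Normal_Form.Char_Poly"
begin

definition mat_poly_eval :: "'a::field poly \<Rightarrow> 'a mat \<Rightarrow> 'a mat" where
  "mat_poly_eval p A = mat (dim_row A) (dim_row A)
     (\<lambda>(i,j). \<Sum>k\<le>degree p. coeff p k * (A ^\<^sub>m k) $$ (i,j))"

definition is_minimal_poly :: "'a::field mat \<Rightarrow> 'a poly \<Rightarrow> bool" where
  "is_minimal_poly A p \<longleftrightarrow> lead_coeff p = 1 \<and> mat_poly_eval p A = 0\<^sub>m (dim_row A) (dim_row A)
     \<and> (\<forall>q. q \<noteq> 0 \<and> mat_poly_eval q A = 0\<^sub>m (dim_row A) (dim_row A) \<longrightarrow> degree p \<le> degree q)"

definition minimal_poly :: "'a::field mat \<Rightarrow> 'a poly" where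
  "minimal_poly A = (THE p. is_minimal_poly A p)"

(* m x n x 2 tensors (A;B) are represented as pairs of m x n matrices *)
type_synonym 'a tensor2 = "'a mat \<times> 'a mat"

definition tensor_carrier :: "nat \<Rightarrow> nat \<Rightarrow> 'a tensor2 set" where
  "tensor_carrier m n = carrier_mat m n \<times> carrier_mat m n"

definition tensor_add :: "'a::plus tensor2 \<Rightarrow> 'a tensor2 \<Rightarrow> 'a tensor2" where
  "tensor_add S T = (fst S + fst T, snd S + snd T)"

definition tensor_minus :: "'a::minus tensor2 \<Rightarrow> 'a tensor2 \<Rightarrow> 'a tensor2" where
  "tensor_minus S T = (fst S - fst T, snd S - snd T)"

definition tensor_zero :: "nat \<Rightarrow> nat \<Rightarrow> 'a::zero tensor2" where
  "tensor_zero m n = (0\<^sub>m m n, 0\<^sub>m m n)"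

definition tensor_sum :: "nat \<Rightarrow> nat \<Rightarrow> 'a::monoid_add tensor2 list \<Rightarrow> 'a tensor2" where
  "tensor_sum m n Ts = foldr tensor_add Ts (tensor_zero m n)"

definition rank_one_tensor :: "nat \<Rightarrow> nat \<Rightarrow> 'a::field tensor2 \<Rightarrow> bool" where
  "rank_one_tensor m n T \<longleftrightarrow> (\<exists>\<alpha> \<beta> a b. a \<in> carrier_vec m \<and> b \<in> carrier_vec n
      \<and> a \<noteq> 0\<^sub>v m \<and> b \<noteq> 0\<^sub>v n \<and> (\<alpha>, \<beta>) \<noteq> (0, 0)
      \<and> T = (\<alpha> \<cdot>\<^sub>m mat m n (\<lambda>(i,j). a $ i * b $ j), \<beta> \<cdot>\<^sub>m mat m n (\<lambda>(i,j). a $ i * b $ j)))"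

definition tensor_rank :: "nat \<Rightarrow> nat \<Rightarrow> 'a::field tensor2 \<Rightarrow> nat" where
  "tensor_rank m n T = (LEAST k. \<exists>Ts. length Ts = k \<and> (\<forall>S\<in>set Ts. rank_one_tensor m n S)
      \<and> tensor_sum m n Ts = T)"

(* diagonalizable: nonsingular P, Q with PAQ, PBQ of the form (D,O) resp. (D,O)^T with D diagonal;
   for an m x n matrix this means exactly that all entries off the main diagonal vanish,
   which is what diagonal_mat expresses for rectangular matrices *)
definition tensor_diagonalizable :: "nat \<Rightarrow> nat \<Rightarrow> 'a::field tensor2 \<Rightarrow> bool" where
  "tensor_diagonalizable m n T \<longleftrightarrow> (\<exists>P Q. P \<in> carrier_mat m m \<and> Q \<in> carrier_mat n n
      \<and> invertible_mat P \<and> invertible_mat Q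
      \<and> diagonal_mat (P * fst T * Q) \<and> diagonal_mat (P * snd T * Q))"

end

theory Submission
  imports Defs "HOL-Computational_Algebra.Field_as_Ring"
begin

(* Let A be an l x l matrix over a field of characteristic 0 whose minimal polynomial has
   degree l.  Then A has a cyclic vector c: p(A) c \<noteq> 0 for every nonzero polynomial p of
   degree < l.  Pick distinct scalars r_0, ..., r_(l-1), put L_j = \<Prod>(k\<noteq>j) (x - r_k) and
   q = \<Prod>k (x - r_k).  The vectors u_j = L_j(A) c form a basis (a vanishing combination of them
   would be a nonzero polynomial of degree < l killing c), and (A - r_j) u_j = q(A) c =: a for
   all j.  If b is the covector with b u_j = 1 for all j, then (A - a b^T) u_j = r_j u_j, so
   A - a b^T = U diag(r) U^-1 for U = (u_0 ... u_(l-1)).  Hence (E;A) - (0; a b^T) is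
   diagonalizable, and (E;A) = (0; a b^T) + \<Sum>j (u_j v_j^T; r_j u_j v_j^T), where v_j are
   the rows of U^-1, has rank at most l + 1. *)

section \<open>Evaluating polynomials at matrices\<close>

lemma mat_poly_eval_dim [simp]:
  "dim_row (mat_poly_eval p A) = dim_row A" "dim_col (mat_poly_eval p A) = dim_row A"
  unfolding mat_poly_eval_def by auto

lemma mat_poly_eval_carrier [simp]:
  "A \<in> carrier_mat n n \<Longrightarrow> mat_poly_eval p A \<in> carrier_mat n n"
  unfolding mat_poly_eval_def by auto

lemma mat_poly_eval_index:
  assumes A: "A \<in> carrier_mat n n" and ij: "i < n" "j < n" and N: "degree p \<le> N"
  shows "mat_poly_eval p A $$ (i,j) = (\<Sum>k\<le>N. coeff p k * (A ^\<^sub>m k) $$ (i,j))"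
proof -
  have "(\<Sum>k\<le>N. coeff p k * (A ^\<^sub>m k) $$ (i,j)) = (\<Sum>k\<le>degree p. coeff p k * (A ^\<^sub>m k) $$ (i,j))"
    by (rule sum.mono_neutral_right) (use N in \<open>auto simp: coeff_eq_0\<close>)
  thus ?thesis using A ij unfolding mat_poly_eval_def by auto
qed

lemma mat_poly_eval_zero: "A \<in> carrier_mat n n \<Longrightarrow> mat_poly_eval 0 A = 0\<^sub>m n n"
  by (rule eq_matI) (auto simp: mat_poly_eval_index[of A n _ _ 0 0])

lemma mat_poly_eval_add:
  assumes A: "A \<in> carrier_mat n n"
  shows "mat_poly_eval (p + q) A = mat_poly_eval p A + mat_poly_eval q A"
proof (rule eq_matI)
  fix i j assume "i < dim_row (mat_poly_eval p A + mat_poly_eval q A)"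
    "j < dim_col (mat_poly_eval p A + mat_poly_eval q A)"
  hence ij: "i < n" "j < n" using A by auto
  let ?N = "max (degree p) (degree q)"
  have "degree (p + q) \<le> ?N" by (simp add: degree_add_le)
  thus "mat_poly_eval (p + q) A $$ (i, j) = (mat_poly_eval p A + mat_poly_eval q A) $$ (i, j)"
    using ij A by (simp add: mat_poly_eval_index[OF A ij] mat_poly_eval_index[OF A ij, of p ?N]
        mat_poly_eval_index[OF A ij, of q ?N] sum.distrib algebra_simps)
qed (use A in auto)

lemma mat_poly_eval_diff:
  assumes A: "A \<in> carrier_mat n n"
  shows "mat_poly_eval (p - q) A = mat_poly_eval p A - mat_poly_eval q A"
proof (rule eq_matI)
  fix i j assume "i < dim_row (mat_poly_eval p A - mat_poly_eval q A)"
    "j < dim_col (mat_poly_eval p A - mat_poly_eval q A)"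
  hence ij: "i < n" "j < n" using A by auto
  let ?N = "max (degree p) (degree q)"
  have "degree (p - q) \<le> ?N" by (simp add: degree_diff_le)
  thus "mat_poly_eval (p - q) A $$ (i, j) = (mat_poly_eval p A - mat_poly_eval q A) $$ (i, j)"
    using ij A by (simp add: mat_poly_eval_index[OF A ij] mat_poly_eval_index[OF A ij, of p ?N]
        mat_poly_eval_index[OF A ij, of q ?N] sum_subtractf algebra_simps)
qed (use A in auto)

lemma mat_poly_eval_smult:
  assumes A: "A \<in> carrier_mat n n"
  shows "mat_poly_eval (Polynomial.smult a p) A = a \<cdot>\<^sub>m mat_poly_eval p A"
proof (rule eq_matI)
  fix i j assume "i < dim_row (a \<cdot>\<^sub>m mat_poly_eval p A)" "j < dim_col (a \<cdot>\<^sub>m mat_poly_eval p A)"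
  hence ij: "i < n" "j < n" using A by auto
  have "degree (Polynomial.smult a p) \<le> degree p" by (simp add: degree_smult_le)
  thus "mat_poly_eval (Polynomial.smult a p) A $$ (i, j) = (a \<cdot>\<^sub>m mat_poly_eval p A) $$ (i, j)"
    using ij A by (simp add: mat_poly_eval_index[OF A ij] mat_poly_eval_index[OF A ij, of p "degree p"]
        sum_distrib_left algebra_simps)
qed (use A in auto)

lemma mat_poly_eval_pCons:
  assumes A: "A \<in> carrier_mat n n"
  shows "mat_poly_eval (pCons a p) A = a \<cdot>\<^sub>m 1\<^sub>m n + mat_poly_eval p A * A"
proof (rule eq_matI)
  fix i j assume "i < dim_row (a \<cdot>\<^sub>m 1\<^sub>m n + mat_poly_eval p A * A)"
    "j < dim_col (a \<cdot>\<^sub>m 1\<^sub>m n + mat_poly_eval p A * A)"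
  hence ij: "i < n" "j < n" using A by auto
  let ?d = "degree p"
  have "mat_poly_eval (pCons a p) A $$ (i,j)
      = (\<Sum>k\<le>Suc ?d. coeff (pCons a p) k * (A ^\<^sub>m k) $$ (i,j))"
    by (rule mat_poly_eval_index[OF A ij]) simp
  also have "\<dots> = a * 1\<^sub>m n $$ (i,j) + (\<Sum>k\<le>?d. coeff p k * (A ^\<^sub>m Suc k) $$ (i,j))"
    by (subst sum.atMost_Suc_shift) (use A in simp)
  also have "(\<Sum>k\<le>?d. coeff p k * (A ^\<^sub>m Suc k) $$ (i,j))
      = (\<Sum>m<n. (\<Sum>k\<le>?d. coeff p k * (A ^\<^sub>m k) $$ (i,m)) * A $$ (m,j))"
    using A ij by (simp add: scalar_prod_def atLeast0LessThan sum_distrib_left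
        sum_distrib_right sum.swap[of _ "{..<n}"] algebra_simps)
  also have "\<dots> = (mat_poly_eval p A * A) $$ (i,j)"
    using A ij by (auto intro!: sum.cong simp: scalar_prod_def atLeast0LessThan
        mat_poly_eval_index[OF A _ _ order.refl])
  finally show "mat_poly_eval (pCons a p) A $$ (i, j) = (a \<cdot>\<^sub>m 1\<^sub>m n + mat_poly_eval p A * A) $$ (i, j)"
    using A ij by simp
qed (use A in auto)

lemma mat_poly_eval_comm:
  assumes A: "A \<in> carrier_mat n n"
  shows "mat_poly_eval p A * A = A * mat_poly_eval p A"
proof (induct p rule: pCons_induct)
  case 0
  then show ?case using A by (simp add: mat_poly_eval_zero)
next
  case (pCons a p)
  let ?E = "mat_poly_eval p A"
  have E: "?E \<in> carrier_mat n n" using A by simp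
  have "(a \<cdot>\<^sub>m 1\<^sub>m n + ?E * A) * A = (a \<cdot>\<^sub>m 1\<^sub>m n) * A + ?E * A * A"
    by (rule add_mult_distrib_mat) (use A E in auto)
  also have "(a \<cdot>\<^sub>m 1\<^sub>m n) * A = A * (a \<cdot>\<^sub>m 1\<^sub>m n)"
    using A by (simp add: mult_smult_assoc_mat[OF one_carrier_mat A] mult_smult_distrib[OF A one_carrier_mat])
  also have "?E * A * A = A * (?E * A)"
    using pCons(2) assoc_mult_mat[OF A E A] by simp
  also have "A * (a \<cdot>\<^sub>m 1\<^sub>m n) + A * (?E * A) = A * (a \<cdot>\<^sub>m 1\<^sub>m n + ?E * A)"
    by (rule mult_add_distrib_mat[symmetric]) (use A E in auto)
  finally show ?case using A by (simp add: mat_poly_eval_pCons)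
qed

lemma mat_poly_eval_mult:
  assumes A: "A \<in> carrier_mat n n"
  shows "mat_poly_eval (p * q) A = mat_poly_eval p A * mat_poly_eval q A"
proof (induct p rule: pCons_induct)
  case 0
  then show ?case using A by (simp add: mat_poly_eval_zero)
next
  case (pCons a p)
  let ?P = "mat_poly_eval p A" and ?Q = "mat_poly_eval q A"
  have P: "?P \<in> carrier_mat n n" and Q: "?Q \<in> carrier_mat n n" using A by auto
  have "mat_poly_eval (pCons a p * q) A = mat_poly_eval (Polynomial.smult a q + pCons 0 (p * q)) A"
    by simp
  also have "\<dots> = a \<cdot>\<^sub>m ?Q + (0 \<cdot>\<^sub>m 1\<^sub>m n + ?P * ?Q * A)"
    using A by (simp add: mat_poly_eval_add mat_poly_eval_smult mat_poly_eval_pCons pCons(2))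
  also have "(0::'a) \<cdot>\<^sub>m 1\<^sub>m n = 0\<^sub>m n n" by (rule eq_matI) auto
  also have "0\<^sub>m n n + ?P * ?Q * A = ?P * ?Q * A"
    by (rule left_add_zero_mat) (use A P Q in auto)
  also have "?P * ?Q * A = ?P * (A * ?Q)"
    using mat_poly_eval_comm[OF A, of q] by (simp add: assoc_mult_mat[OF P Q A])
  also have "?P * (A * ?Q) = ?P * A * ?Q" by (rule assoc_mult_mat[OF P A Q, symmetric])
  also have "a \<cdot>\<^sub>m ?Q + ?P * A * ?Q = (a \<cdot>\<^sub>m 1\<^sub>m n) * ?Q + ?P * A * ?Q"
    using Q by (simp add: mult_smult_assoc_mat[OF one_carrier_mat Q] left_mult_one_mat[OF Q])
  also have "\<dots> = (a \<cdot>\<^sub>m 1\<^sub>m n + ?P * A) * ?Q"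
    by (rule add_mult_distrib_mat[symmetric]) (use A P Q in auto)
  finally show ?case using A by (simp add: mat_poly_eval_pCons)
qed

lemma mat_poly_eval_mult_vec:
  assumes A: "A \<in> carrier_mat n n" and c: "c \<in> carrier_vec n"
  shows "mat_poly_eval (p * q) A *\<^sub>v c = mat_poly_eval p A *\<^sub>v (mat_poly_eval q A *\<^sub>v c)"
  using A c by (simp add: mat_poly_eval_mult assoc_mult_mat_vec[of _ n n _ n])

lemma mat_poly_eval_mult_vec_carrier [simp]:
  "A \<in> carrier_mat n n \<Longrightarrow> c \<in> carrier_vec n \<Longrightarrow> mat_poly_eval p A *\<^sub>v c \<in> carrier_vec n"
  by (rule mult_mat_vec_carrier) simp_all

lemma mat_poly_eval_linear:
  assumes A: "A \<in> carrier_mat n n" and v: "v \<in> carrier_vec n"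
  shows "mat_poly_eval [:c, 1:] A *\<^sub>v v = c \<cdot>\<^sub>v v + A *\<^sub>v v"
proof -
  have "1 \<cdot>\<^sub>m 1\<^sub>m n = (1\<^sub>m n :: 'a mat)" by (rule eq_matI) auto
  hence "mat_poly_eval [:c, 1:] A = c \<cdot>\<^sub>m 1\<^sub>m n + A"
    using A by (simp add: mat_poly_eval_pCons mat_poly_eval_zero)
  moreover have "(c \<cdot>\<^sub>m 1\<^sub>m n) *\<^sub>v v = c \<cdot>\<^sub>v (1\<^sub>m n *\<^sub>v v)" using v by auto
  ultimately show ?thesis using A v by (simp add: add_mult_distrib_mat_vec[of _ n n])
qed

lemma mat_poly_eval_sum_index:
  assumes A: "A \<in> carrier_mat n n" and ij: "i < n" "j < n" and S: "finite S"
  shows "mat_poly_eval (sum f S) A $$ (i,j) = (\<Sum>s\<in>S. mat_poly_eval (f s) A $$ (i,j))"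
  using S by induct (use A ij in \<open>simp_all add: mat_poly_eval_zero mat_poly_eval_add\<close>)

section \<open>The minimal polynomial\<close>

text \<open>Some nonzero polynomial of degree at most n^2 annihilates an n x n matrix: the n^2 + 1
  powers of A are linearly dependent.  The dependency is a kernel vector of the square matrix of
  size n^2 + 1 whose row for the entry (i,j) lists (A^k)_ij for k = 0..n^2, padded with a zero
  row to make it square (hence singular).\<close>

lemma annihilating_poly_exists:
  assumes A: "(A :: 'a :: field mat) \<in> carrier_mat n n"
  shows "\<exists>p. p \<noteq> 0 \<and> mat_poly_eval p A = 0\<^sub>m n n"
proof -
  define N where "N = n * n"
  define entries where "entries = (\<lambda>r. vec (N+1) (\<lambda>k. (A ^\<^sub>m k) $$ (r div n, r mod n)))"
  define M where "M = mat\<^sub>r (N+1) (N+1) (\<lambda>r. if r = N then 0\<^sub>v (N+1) else entries r)"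
  have M: "M \<in> carrier_mat (N+1) (N+1)" unfolding M_def by auto
  have "det M = 0" unfolding M_def by (rule det_row_0) (auto simp: entries_def)
  then obtain v where v: "v \<in> carrier_vec (N+1)" "v \<noteq> 0\<^sub>v (N+1)" "M *\<^sub>v v = 0\<^sub>v (N+1)"
    using det_0_iff_vec_prod_zero[OF M] by auto
  define p where "p = (\<Sum>k\<le>N. monom (v $ k) k)"
  have coeff_p: "coeff p k = (if k \<le> N then v $ k else 0)" for k
    unfolding p_def by (simp add: coeff_sum coeff_monom)
  have deg_p: "degree p \<le> N" by (rule degree_le) (auto simp: coeff_p)
  obtain k where "k < N+1" "v $ k \<noteq> 0"
    using v by (metis carrier_vecD eq_vecI index_zero_vec(1,2))
  hence "p \<noteq> 0" using coeff_p[of k] by auto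
  moreover have "mat_poly_eval p A = 0\<^sub>m n n"
  proof (rule eq_matI)
    fix i j assume "i < dim_row (0\<^sub>m n n :: 'a mat)" "j < dim_col (0\<^sub>m n n :: 'a mat)"
    hence ij: "i < n" "j < n" by auto
    have "i * n + j < Suc i * n" using ij by simp
    also have "\<dots> \<le> N" unfolding N_def using ij by (intro mult_le_mono1) simp
    finally have r: "i * n + j < N" .
    have "mat_poly_eval p A $$ (i,j) = (\<Sum>k<N+1. v $ k * (A ^\<^sub>m k) $$ (i,j))"
      by (simp add: mat_poly_eval_index[OF A ij deg_p] coeff_p lessThan_Suc_atMost)
    also have "\<dots> = entries (i * n + j) \<bullet> v"
      using v ij unfolding entries_def by (simp add: scalar_prod_def atLeast0LessThan mult.commute)
    also have "\<dots> = (M *\<^sub>v v) $ (i * n + j)" using r M unfolding M_def by (simp add: entries_def)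
    finally show "mat_poly_eval p A $$ (i,j) = 0\<^sub>m n n $$ (i,j)" using v r ij by simp
  qed (use A in auto)
  ultimately show ?thesis by blast
qed

lemma is_minimal_poly_unique:
  assumes A: "(A :: 'a :: field mat) \<in> carrier_mat n n"
  shows "\<exists>!p. is_minimal_poly A p"
proof -
  let ?ann = "\<lambda>d. \<exists>p. p \<noteq> 0 \<and> mat_poly_eval p A = 0\<^sub>m n n \<and> degree p = d"
  define d where "d = (LEAST d. ?ann d)"
  from LeastI_ex[of ?ann] annihilating_poly_exists[OF A]
  obtain p where p: "p \<noteq> 0" "mat_poly_eval p A = 0\<^sub>m n n" "degree p = d"
    unfolding d_def by blast
  have d_min: "d \<le> degree q" if "q \<noteq> 0" "mat_poly_eval q A = 0\<^sub>m n n" for q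
    unfolding d_def by (rule Least_le) (use that in blast)
  have "is_minimal_poly A (Polynomial.smult (inverse (lead_coeff p)) p)"
    using A p d_min by (auto simp: is_minimal_poly_def mat_poly_eval_smult)
  moreover have "p1 = p2" if p1: "is_minimal_poly A p1" and p2: "is_minimal_poly A p2" for p1 p2
  proof (rule ccontr)
    assume "p1 \<noteq> p2"
    hence r0: "p1 - p2 \<noteq> 0" by simp
    have lc: "lead_coeff p1 = 1" "lead_coeff p2 = 1"
      and ev: "mat_poly_eval p1 A = 0\<^sub>m n n" "mat_poly_eval p2 A = 0\<^sub>m n n"
      using p1 p2 A unfolding is_minimal_poly_def by auto
    have deg_eq: "degree p1 = degree p2"
      using p1 p2 lc ev A unfolding is_minimal_poly_def
      by (metis le_antisym one_neq_zero leading_coeff_0_iff)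
    have "degree p1 \<le> degree (p1 - p2)"
      using p1 r0 ev A unfolding is_minimal_poly_def by (auto simp: mat_poly_eval_diff)
    moreover have "degree (p1 - p2) \<le> degree p1" using deg_eq by (simp add: degree_diff_le)
    moreover have "coeff (p1 - p2) (degree p1) = 0" using lc deg_eq by simp
    ultimately show False using r0 by (metis le_antisym leading_coeff_0_iff)
  qed
  ultimately show ?thesis by blast
qed

lemma minimal_poly_is_minimal:
  "(A :: 'a :: field mat) \<in> carrier_mat n n \<Longrightarrow> is_minimal_poly A (minimal_poly A)"
  unfolding minimal_poly_def by (rule theI', rule is_minimal_poly_unique)

section \<open>Cyclic vectors\<close>

text \<open>Points (1, t, t^2, ...) of the moment curve; a nonzero matrix kills only finitely many
  of them, since each entry of its image is a polynomial in t.\<close>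

definition moment_vec :: "nat \<Rightarrow> 'a :: field \<Rightarrow> 'a vec" where
  "moment_vec n t = vec n (\<lambda>k. t ^ k)"

lemma finite_kernel_on_moment_curve:
  fixes M :: "'a :: field mat"
  assumes M: "M \<in> carrier_mat m n" and M0: "M \<noteq> 0\<^sub>m m n"
  shows "finite {t. M *\<^sub>v moment_vec n t = 0\<^sub>v m}"
proof -
  obtain i j where ij: "i < m" "j < n" "M $$ (i,j) \<noteq> 0"
    using M M0 by (metis eq_matI carrier_matD index_zero_mat(1-3))
  define p where "p = (\<Sum>k<n. monom (M $$ (i,k)) k)"
  have "coeff p j = M $$ (i,j)"
    using ij unfolding p_def by (simp add: coeff_sum coeff_monom)
  hence "p \<noteq> 0" using ij by auto
  have "poly p t = (M *\<^sub>v moment_vec n t) $ i" for t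
    using M ij unfolding p_def moment_vec_def
    by (simp add: poly_sum poly_monom scalar_prod_def atLeast0LessThan)
  hence "{t. M *\<^sub>v moment_vec n t = 0\<^sub>v m} \<subseteq> {t. poly p t = 0}"
    using ij by auto
  thus ?thesis using poly_roots_finite[OF \<open>p \<noteq> 0\<close>] by (rule finite_subset)
qed

text \<open>Over an infinite field a single vector escapes the kernels of finitely many nonzero
  matrices (a vector space is not a finite union of proper subspaces).\<close>

lemma vec_avoiding_kernels:
  fixes F :: "'a :: field mat set"
  assumes inf: "infinite (UNIV :: 'a set)" and "finite F"
    and F: "F \<subseteq> carrier_mat m n" "\<forall>M\<in>F. M \<noteq> 0\<^sub>m m n"
  shows "\<exists>c \<in> carrier_vec n. \<forall>M\<in>F. M *\<^sub>v c \<noteq> 0\<^sub>v m"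
proof -
  have "finite (\<Union>M\<in>F. {t. M *\<^sub>v moment_vec n t = 0\<^sub>v m})"
    using \<open>finite F\<close> F finite_kernel_on_moment_curve by blast
  then obtain t where "t \<notin> (\<Union>M\<in>F. {t. M *\<^sub>v moment_vec n t = 0\<^sub>v m})"
    using ex_new_if_finite[OF inf] by blast
  thus ?thesis by (intro bexI[of _ "moment_vec n t"]) (auto simp: moment_vec_def)
qed

definition cyclic_vector :: "'a :: field mat \<Rightarrow> 'a vec \<Rightarrow> bool" where
  "cyclic_vector A c \<longleftrightarrow> (\<forall>p. p \<noteq> 0 \<and> degree p < dim_row A
      \<longrightarrow> mat_poly_eval p A *\<^sub>v c \<noteq> 0\<^sub>v (dim_row A))"

lemma mat_mult_zero_vec: "M \<in> carrier_mat m n \<Longrightarrow> M *\<^sub>v 0\<^sub>v n = (0\<^sub>v m :: 'a :: semiring_0 vec)"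
  by (intro eq_vecI) (auto simp: scalar_prod_def)

lemma zero_mat_mult_vec: "c \<in> carrier_vec n \<Longrightarrow> 0\<^sub>m m n *\<^sub>v c = (0\<^sub>v m :: 'a :: semiring_0 vec)"
  by (intro eq_vecI) (auto simp: scalar_prod_def)

text \<open>Choose c outside
  the kernels of (m / q)(A) for the prime factors q of m (these matrices are nonzero by
  minimality of m).  If p(A) c = 0 with p \<noteq> 0 of smaller degree, then also g(A) c = 0 for
  g = gcd p m, a proper divisor of m, so g divides m / q for some prime factor q.\<close>

lemma cyclic_vector_exists:
  fixes A :: "'a :: {field_char_0, field_gcd} mat"
  assumes A: "A \<in> carrier_mat n n" and deg: "degree (minimal_poly A) = n"
  shows "\<exists>c \<in> carrier_vec n. cyclic_vector A c"
proof -
  define m where "m = minimal_poly A"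
  have m0: "m \<noteq> 0" and m_ann: "mat_poly_eval m A = 0\<^sub>m n n"
    and m_min: "\<And>q. q \<noteq> 0 \<Longrightarrow> mat_poly_eval q A = 0\<^sub>m n n \<Longrightarrow> degree m \<le> degree q"
    using minimal_poly_is_minimal[OF A] A unfolding m_def is_minimal_poly_def by auto
  define F where "F = (\<lambda>q. mat_poly_eval (m div q) A) ` set_mset (prime_factorization m)"
  have F_fin: "finite F" and F_carrier: "F \<subseteq> carrier_mat n n" unfolding F_def using A by auto
  have F_nz: "M \<noteq> 0\<^sub>m n n" if "M \<in> F" for M
  proof -
    obtain q where q: "prime q" "q dvd m" and M: "M = mat_poly_eval (m div q) A"
      using \<open>M \<in> F\<close> unfolding F_def by (auto simp: in_prime_factors_iff)
    have m_eq: "m = q * (m div q)" using q(2) by simp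
    hence "m div q \<noteq> 0" "q \<noteq> 0" using m0 by auto
    moreover have "degree q \<noteq> 0"
      using q(1) \<open>q \<noteq> 0\<close> is_unit_iff_degree not_prime_unit by blast
    ultimately have "degree (m div q) < degree m"
      using degree_mult_eq[of q "m div q"] m_eq by simp
    thus ?thesis using m_min \<open>m div q \<noteq> 0\<close> M by force
  qed
  obtain c where c: "c \<in> carrier_vec n" and cF: "\<forall>M\<in>F. M *\<^sub>v c \<noteq> 0\<^sub>v n"
    using vec_avoiding_kernels[OF infinite_UNIV_char_0 F_fin F_carrier] F_nz by blast
  have "mat_poly_eval p A *\<^sub>v c \<noteq> 0\<^sub>v n" if p: "p \<noteq> 0" "degree p < degree m" for p
  proof
    assume pc: "mat_poly_eval p A *\<^sub>v c = 0\<^sub>v n"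
    define g where "g = gcd p m"
    obtain s t where "bezout_coefficients p m = (s, t)" by (cases "bezout_coefficients p m")
    hence bez: "s * p + t * m = g" unfolding g_def by (rule bezout_coefficients)
    have gc: "mat_poly_eval g A *\<^sub>v c = 0\<^sub>v n"
      unfolding bez[symmetric] using A c pc m_ann
      by (simp add: mat_poly_eval_add add_mult_distrib_mat_vec[of _ n n] mat_poly_eval_mult_vec
          mat_mult_zero_vec[OF mat_poly_eval_carrier[OF A]] zero_mat_mult_vec)
    have "g \<noteq> 0" "degree g \<le> degree p"
      unfolding g_def using p by (auto intro: dvd_imp_degree_le)
    define h where "h = m div g"
    have m_eq: "m = g * h" unfolding h_def g_def by simp
    hence "h \<noteq> 0" using m0 by auto
    have "degree m = degree g + degree h" using m_eq degree_mult_eq \<open>g \<noteq> 0\<close> \<open>h \<noteq> 0\<close> by metis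
    hence "\<not> is_unit h" using p \<open>degree g \<le> degree p\<close> is_unit_iff_degree[OF \<open>h \<noteq> 0\<close>] by auto
    then obtain q where q: "prime q" "q dvd h" using prime_divisorE[OF \<open>h \<noteq> 0\<close>] by metis
    then obtain r where "h = q * r" by (elim dvdE)
    hence "m div q = r * g" using m_eq q by (simp add: ac_simps)
    hence "mat_poly_eval (m div q) A *\<^sub>v c = 0\<^sub>v n"
      using A c gc by (simp add: mat_poly_eval_mult_vec mat_mult_zero_vec[OF mat_poly_eval_carrier[OF A]])
    moreover have "q \<in> prime_factors m"
      using q m_eq m0 by (intro prime_factorsI) auto
    hence "mat_poly_eval (m div q) A \<in> F" unfolding F_def by blast
    ultimately show False using cF by auto
  qed
  thus ?thesis using c A deg unfolding cyclic_vector_def m_def by auto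
qed

section \<open>Rank bounds from explicit decompositions\<close>

definition outer_mat :: "'a :: times vec \<Rightarrow> 'a vec \<Rightarrow> 'a mat" where
  "outer_mat a b = mat (dim_vec a) (dim_vec b) (\<lambda>(i,j). a $ i * b $ j)"

lemma outer_mat_dim [simp]:
  "dim_row (outer_mat a b) = dim_vec a" "dim_col (outer_mat a b) = dim_vec b"
  unfolding outer_mat_def by auto

lemma outer_mat_carrier [simp]:
  "a \<in> carrier_vec m \<Longrightarrow> b \<in> carrier_vec n \<Longrightarrow> outer_mat a b \<in> carrier_mat m n"
  unfolding outer_mat_def by auto

definition tensor_decomposes :: "nat \<Rightarrow> nat \<Rightarrow> nat \<Rightarrow> 'a :: field tensor2 \<Rightarrow> bool" where
  "tensor_decomposes m n k T \<longleftrightarrow> (\<exists>Ts. length Ts \<le> k \<and> (\<forall>S\<in>set Ts. rank_one_tensor m n S)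
      \<and> tensor_sum m n Ts = T)"

lemma tensor_rank_le:
  assumes "tensor_decomposes m n k T"
  shows "tensor_rank m n T \<le> k"
proof -
  obtain Ts where Ts: "length Ts \<le> k" "\<forall>S\<in>set Ts. rank_one_tensor m n S" "tensor_sum m n Ts = T"
    using assms unfolding tensor_decomposes_def by blast
  hence "tensor_rank m n T \<le> length Ts" unfolding tensor_rank_def by (intro Least_le) blast
  thus ?thesis using Ts(1) by simp
qed

lemma rank_one_tensor_carrier: "rank_one_tensor m n S \<Longrightarrow> S \<in> tensor_carrier m n"
  unfolding rank_one_tensor_def tensor_carrier_def by auto

lemma tensor_sum_carrier: "set Ts \<subseteq> tensor_carrier m n \<Longrightarrow> tensor_sum m n Ts \<in> tensor_carrier m n"
  by (induct Ts) (auto simp: tensor_sum_def tensor_zero_def tensor_add_def tensor_carrier_def)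

lemma tensor_sum_append:
  assumes "set Ts \<subseteq> tensor_carrier m n" "set Rs \<subseteq> tensor_carrier m n"
  shows "tensor_sum m n (Ts @ Rs) = tensor_add (tensor_sum m n Ts) (tensor_sum m n Rs)"
  using assms
proof (induct Ts)
  case Nil
  then show ?case using tensor_sum_carrier[OF Nil(2)]
    by (auto simp: tensor_sum_def tensor_zero_def tensor_add_def tensor_carrier_def)
next
  case (Cons S Ts)
  then show ?case using tensor_sum_carrier[of Ts m n] tensor_sum_carrier[of Rs m n]
    by (auto simp: tensor_sum_def tensor_add_def tensor_carrier_def assoc_add_mat[of _ m n])
qed

lemma tensor_decomposes_add:
  assumes "tensor_decomposes m n k S" "tensor_decomposes m n k' R"
  shows "tensor_decomposes m n (k + k') (tensor_add S R)"
proof -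
  obtain Ss Rs where Ss: "length Ss \<le> k" "\<forall>S\<in>set Ss. rank_one_tensor m n S" "tensor_sum m n Ss = S"
    and Rs: "length Rs \<le> k'" "\<forall>S\<in>set Rs. rank_one_tensor m n S" "tensor_sum m n Rs = R"
    using assms unfolding tensor_decomposes_def by blast
  have "tensor_sum m n (Ss @ Rs) = tensor_add S R"
    using Ss Rs rank_one_tensor_carrier by (subst tensor_sum_append) blast+
  thus ?thesis using Ss Rs unfolding tensor_decomposes_def
    by (intro exI[of _ "Ss @ Rs"]) auto
qed

lemma tensor_decomposes_sum:
  "\<forall>S\<in>set Ss. tensor_decomposes m n 1 S \<Longrightarrow> tensor_decomposes m n (length Ss) (tensor_sum m n Ss)"
proof (induct Ss)
  case Nil
  then show ?case unfolding tensor_decomposes_def by auto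
next
  case (Cons S Ss)
  then show ?case using tensor_decomposes_add[of m n 1 S "length Ss"]
    by (simp add: tensor_sum_def)
qed

lemma outer_tensor_decomposes:
  assumes a: "a \<in> carrier_vec m" and b: "b \<in> carrier_vec n"
  shows "tensor_decomposes m n 1 (\<alpha> \<cdot>\<^sub>m outer_mat a b, \<beta> \<cdot>\<^sub>m outer_mat a b)"
    (is "tensor_decomposes m n 1 ?T")
proof (cases "a \<noteq> 0\<^sub>v m \<and> b \<noteq> 0\<^sub>v n \<and> (\<alpha>, \<beta>) \<noteq> (0, 0)")
  case True
  hence "rank_one_tensor m n ?T"
    using a b unfolding rank_one_tensor_def outer_mat_def by auto
  moreover have "tensor_sum m n [?T] = ?T"
    using a b by (auto simp: tensor_sum_def tensor_add_def tensor_zero_def)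
  ultimately show ?thesis unfolding tensor_decomposes_def by (intro exI[of _ "[?T]"]) auto
next
  case False
  hence "?T = tensor_zero m n"
    using a b by (auto simp: tensor_zero_def outer_mat_def intro!: eq_matI)
  thus ?thesis unfolding tensor_decomposes_def by (intro exI[of _ "[]"]) (auto simp: tensor_sum_def)
qed

lemma tensor_sum_index:
  assumes "set Ts \<subseteq> tensor_carrier m n"
  shows "tensor_sum m n Ts = (mat m n (\<lambda>ij. \<Sum>S\<leftarrow>Ts. fst S $$ ij), mat m n (\<lambda>ij. \<Sum>S\<leftarrow>Ts. snd S $$ ij))"
  using assms
  by (induct Ts) (auto simp: tensor_sum_def tensor_zero_def tensor_add_def tensor_carrier_def intro!: eq_matI)

text \<open>If A' = U diag(d) U^-1, then (E;A') = \<Sum>j (u_j v_j^T; d_j u_j v_j^T) with u_j the columns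
  of U and v_j the rows of U^-1, so (E;A') has rank at most l.\<close>

lemma similar_diag_pencil_decomposes:
  assumes sim: "similar_mat_wit A' (mat_diag l d) U V" and A': "A' \<in> carrier_mat l l"
  shows "tensor_decomposes l l l (1\<^sub>m l, A')"
proof -
  have U: "U \<in> carrier_mat l l" and V: "V \<in> carrier_mat l l" and UV: "U * V = 1\<^sub>m l"
    and A'_eq: "A' = U * mat_diag l d * V"
    using sim A' unfolding similar_mat_wit_def by (auto simp: Let_def)
  define S where "S = (\<lambda>j. (1 \<cdot>\<^sub>m outer_mat (col U j) (row V j), d j \<cdot>\<^sub>m outer_mat (col U j) (row V j)))"
  have S: "tensor_decomposes l l 1 (S j)" for j
    unfolding S_def using U V by (intro outer_tensor_decomposes) auto
  have sum_S: "(\<Sum>T\<leftarrow>map S [0..<l]. f T) = (\<Sum>j<l. f (S j))" for f :: "'a tensor2 \<Rightarrow> 'a"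
    by (simp add: sum_list_distinct_conv_sum_set atLeast0LessThan image_comp sum.reindex)
  have S_carrier: "set (map S [0..<l]) \<subseteq> tensor_carrier l l"
    unfolding S_def tensor_carrier_def using U V by auto
  have first: "mat l l (\<lambda>ij. \<Sum>T\<leftarrow>map S [0..<l]. fst T $$ ij) = 1\<^sub>m l"
  proof (rule eq_matI)
    fix i k assume "i < dim_row (1\<^sub>m l)" "k < dim_col (1\<^sub>m l :: 'a mat)"
    hence ik: "i < l" "k < l" by auto
    have "(\<Sum>T\<leftarrow>map S [0..<l]. fst T $$ (i,k)) = (\<Sum>j<l. U $$ (i,j) * V $$ (j,k))"
      using ik U V unfolding sum_S by (auto simp: S_def outer_mat_def intro!: sum.cong)
    also have "\<dots> = (U * V) $$ (i,k)"
      using ik U V by (simp add: scalar_prod_def atLeast0LessThan)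
    finally show "mat l l (\<lambda>ij. \<Sum>T\<leftarrow>map S [0..<l]. fst T $$ ij) $$ (i,k) = 1\<^sub>m l $$ (i,k)"
      using ik UV by simp
  qed auto
  have second: "mat l l (\<lambda>ij. \<Sum>T\<leftarrow>map S [0..<l]. snd T $$ ij) = A'"
  proof (rule eq_matI)
    fix i k assume "i < dim_row A'" "k < dim_col A'"
    hence ik: "i < l" "k < l" using A' by auto
    have "(\<Sum>T\<leftarrow>map S [0..<l]. snd T $$ (i,k)) = (\<Sum>j<l. (U $$ (i,j) * d j) * V $$ (j,k))"
      using ik U V unfolding sum_S by (auto simp: S_def outer_mat_def intro!: sum.cong)
    also have "\<dots> = (U * mat_diag l d * V) $$ (i,k)"
      using ik U V by (simp add: mat_diag_mult_right[OF U] scalar_prod_def atLeast0LessThan)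
    finally show "mat l l (\<lambda>ij. \<Sum>T\<leftarrow>map S [0..<l]. snd T $$ ij) $$ (i,k) = A' $$ (i,k)"
      using ik A'_eq by simp
  qed (use A' in auto)
  have "tensor_sum l l (map S [0..<l]) = (1\<^sub>m l, A')"
    using tensor_sum_index[OF S_carrier] first second by simp
  thus ?thesis using tensor_decomposes_sum[of "map S [0..<l]" l l] S by simp
qed

text \<open>In the same situation (E;A') is diagonalized by P = U^-1, Q = U.\<close>

lemma similar_diag_pencil_diagonalizable:
  assumes sim: "similar_mat_wit A' (mat_diag l d) U V" and A': "A' \<in> carrier_mat l l"
  shows "tensor_diagonalizable l l (1\<^sub>m l, A')"
proof -
  have U: "U \<in> carrier_mat l l" and V: "V \<in> carrier_mat l l"
    and UV: "U * V = 1\<^sub>m l" and VU: "V * U = 1\<^sub>m l" and A'_eq: "A' = U * mat_diag l d * V"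
    using sim A' unfolding similar_mat_wit_def by (auto simp: Let_def)
  let ?D = "mat_diag l d"
  have D: "?D \<in> carrier_mat l l" by simp
  have "A' * U = U * ?D * (V * U)"
    unfolding A'_eq by (rule assoc_mult_mat[OF mult_carrier_mat[OF U D] V U])
  also have "\<dots> = U * ?D" using VU right_mult_one_mat[OF mult_carrier_mat[OF U D]] by simp
  finally have "V * A' * U = (V * U) * ?D"
    by (simp add: assoc_mult_mat[OF V A' U] assoc_mult_mat[OF V U D])
  hence "V * A' * U = ?D" using VU left_mult_one_mat[OF D] by simp
  moreover have "invertible_mat U" "invertible_mat V"
    using U V UV VU unfolding invertible_mat_def inverts_mat_def by auto
  ultimately show ?thesis unfolding tensor_diagonalizable_def using U V VU
    by (intro exI[of _ V] exI[of _ U]) (auto simp: diagonal_mat_def mat_diag_def)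
qed

section \<open>The Lagrange basis of a cyclic vector\<close>

definition lagrange_factor :: "(nat \<Rightarrow> 'a :: field) \<Rightarrow> nat \<Rightarrow> nat \<Rightarrow> 'a poly" where
  "lagrange_factor r l j = (\<Prod>k\<in>{..<l} - {j}. [:- r k, 1:])"

lemma poly_lagrange_factor:
  assumes "k < l"
  shows "poly (lagrange_factor r l j) (r k) = (if k = j then (\<Prod>i\<in>{..<l} - {j}. r j - r i) else 0)"
  using assms unfolding lagrange_factor_def by (auto simp: poly_prod prod_zero_iff)

lemma degree_lagrange_factor:
  assumes "j < l"
  shows "degree (lagrange_factor r l j) \<le> l - 1"
proof -
  have "degree (lagrange_factor r l j) \<le> sum (degree \<circ> (\<lambda>k. [:- r k, 1:])) ({..<l} - {j})"
    unfolding lagrange_factor_def by (rule degree_prod_sum_le) simp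
  thus ?thesis using assms by simp
qed

definition lagrange_basis :: "'a :: field mat \<Rightarrow> 'a vec \<Rightarrow> (nat \<Rightarrow> 'a) \<Rightarrow> 'a mat" where
  "lagrange_basis A c r = mat (dim_row A) (dim_row A)
     (\<lambda>(i,j). (mat_poly_eval (lagrange_factor r (dim_row A) j) A *\<^sub>v c) $ i)"

lemma col_lagrange_basis:
  assumes A: "A \<in> carrier_mat l l" and c: "c \<in> carrier_vec l" and j: "j < l"
  shows "col (lagrange_basis A c r) j = mat_poly_eval (lagrange_factor r l j) A *\<^sub>v c"
  using A c j unfolding lagrange_basis_def by (intro eq_vecI) auto

lemma lagrange_basis_mult_vec:
  assumes A: "A \<in> carrier_mat l l" and c: "c \<in> carrier_vec l" and x: "x \<in> carrier_vec l"
  shows "lagrange_basis A c r *\<^sub>v x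
      = mat_poly_eval (\<Sum>j<l. Polynomial.smult (x $ j) (lagrange_factor r l j)) A *\<^sub>v c"
    (is "?U *\<^sub>v x = mat_poly_eval ?p A *\<^sub>v c")
proof (rule eq_vecI)
  let ?L = "lagrange_factor r l"
  have U: "?U \<in> carrier_mat l l" using A unfolding lagrange_basis_def by auto
  fix i assume "i < dim_vec (mat_poly_eval ?p A *\<^sub>v c)"
  hence i: "i < l" using A by simp
  have "(mat_poly_eval ?p A *\<^sub>v c) $ i = (\<Sum>m<l. (\<Sum>j<l. x $ j * mat_poly_eval (?L j) A $$ (i,m)) * c $ m)"
    using A c i by (auto simp: scalar_prod_def atLeast0LessThan mat_poly_eval_sum_index
        mat_poly_eval_smult intro!: sum.cong)
  also have "\<dots> = (\<Sum>m<l. \<Sum>j<l. x $ j * (mat_poly_eval (?L j) A $$ (i,m) * c $ m))"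
    by (simp add: sum_distrib_right mult.assoc)
  also have "\<dots> = (\<Sum>j<l. x $ j * (\<Sum>m<l. mat_poly_eval (?L j) A $$ (i,m) * c $ m))"
    by (subst sum.swap) (simp add: sum_distrib_left)
  also have "\<dots> = (?U *\<^sub>v x) $ i"
    using A c i U x by (auto simp: lagrange_basis_def scalar_prod_def atLeast0LessThan
        mult.commute intro!: sum.cong)
  finally show "(?U *\<^sub>v x) $ i = (mat_poly_eval ?p A *\<^sub>v c) $ i" by simp
qed (use A in \<open>simp add: lagrange_basis_def\<close>)

text \<open>For a cyclic vector c and distinct nodes the u_j are independent: if U x = 0 then
  p = \<Sum>j x_j L_j has degree < l and kills c, so p = 0, and p(r_k) = x_k L_k(r_k) forces
  x = 0.\<close>

lemma lagrange_basis_invertible: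
  assumes A: "A \<in> carrier_mat l l" and c: "c \<in> carrier_vec l" and cyc: "cyclic_vector A c"
    and r: "inj_on r {..<l}"
  shows "det (lagrange_basis A c r) \<noteq> 0"
proof
  let ?U = "lagrange_basis A c r"
  have U: "?U \<in> carrier_mat l l" using A unfolding lagrange_basis_def by auto
  assume "det ?U = 0"
  then obtain x where x: "x \<in> carrier_vec l" "x \<noteq> 0\<^sub>v l" "?U *\<^sub>v x = 0\<^sub>v l"
    using det_0_iff_vec_prod_zero[OF U] by auto
  define p where "p = (\<Sum>j<l. Polynomial.smult (x $ j) (lagrange_factor r l j))"
  have p_kills_c: "mat_poly_eval p A *\<^sub>v c = 0\<^sub>v l"
    using lagrange_basis_mult_vec[OF A c x(1)] x(3) unfolding p_def by simp
  obtain k where k: "k < l" "x $ k \<noteq> 0"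
    using x by (metis carrier_vecD eq_vecI index_zero_vec(1,2))
  have "poly p (r k) = x $ k * (\<Prod>i\<in>{..<l} - {k}. r k - r i)"
    using k by (simp add: p_def poly_sum poly_lagrange_factor if_distrib sum.delta cong: if_cong)
  moreover have "(\<Prod>i\<in>{..<l} - {k}. r k - r i) \<noteq> 0"
    using r k by (auto simp: prod_zero_iff inj_on_def)
  ultimately have "p \<noteq> 0" using k by auto
  moreover have "degree p < l"
  proof -
    have "degree p \<le> l - 1" unfolding p_def using degree_lagrange_factor[of _ l r]
      by (intro degree_sum_le) (auto intro: order.trans[OF degree_smult_le])
    thus ?thesis using k by simp
  qed
  ultimately show False using cyc p_kills_c A unfolding cyclic_vector_def by auto
qed

text \<open>(A - r_j) u_j = q(A) c for every j, where q = \<Prod>k (x - r_k) = (x - r_j) L_j.\<close>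

lemma lagrange_basis_shift:
  assumes A: "A \<in> carrier_mat l l" and c: "c \<in> carrier_vec l" and j: "j < l"
  shows "A *\<^sub>v col (lagrange_basis A c r) j
      = mat_poly_eval (\<Prod>k<l. [:- r k, 1:]) A *\<^sub>v c + r j \<cdot>\<^sub>v col (lagrange_basis A c r) j"
proof -
  define u where "u = col (lagrange_basis A c r) j"
  have u_def': "u = mat_poly_eval (lagrange_factor r l j) A *\<^sub>v c"
    unfolding u_def by (rule col_lagrange_basis[OF A c j])
  have u: "u \<in> carrier_vec l" unfolding u_def' using A c by simp
  have "(\<Prod>k<l. [:- r k, 1:]) = [:- r j, 1:] * lagrange_factor r l j"
    unfolding lagrange_factor_def using j by (simp add: prod.remove)
  hence "mat_poly_eval (\<Prod>k<l. [:- r k, 1:]) A *\<^sub>v c = mat_poly_eval [:- r j, 1:] A *\<^sub>v u"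
    unfolding u_def' by (simp only: mat_poly_eval_mult_vec[OF A c])
  also have "\<dots> = (- r j) \<cdot>\<^sub>v u + A *\<^sub>v u" by (rule mat_poly_eval_linear[OF A u])
  finally have q_u: "mat_poly_eval (\<Prod>k<l. [:- r k, 1:]) A *\<^sub>v c = (- r j) \<cdot>\<^sub>v u + A *\<^sub>v u" .
  show ?thesis unfolding u_def[symmetric] q_u by (rule eq_vecI) (use A u in auto)
qed

section \<open>Diagonalizing by a rank-one correction\<close>

text \<open>The column sums b of V = U^-1 form the covector taking the value 1 on every column of U,
  since b^T = (1, ..., 1) V.\<close>

lemma column_sums_of_inverse:
  assumes U: "U \<in> carrier_mat l l" and V: "V \<in> carrier_mat l l" and VU: "V * U = 1\<^sub>m l"
    and j: "j < l"
  shows "vec l (\<lambda>k. \<Sum>i<l. V $$ (i,k)) \<bullet> col U j = 1"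
proof -
  have "vec l (\<lambda>k. \<Sum>i<l. V $$ (i,k)) \<bullet> col U j = (\<Sum>k<l. \<Sum>i<l. V $$ (i,k) * U $$ (k,j))"
    using U j by (simp add: scalar_prod_def atLeast0LessThan sum_distrib_right)
  also have "\<dots> = (\<Sum>i<l. \<Sum>k<l. V $$ (i,k) * U $$ (k,j))" by (rule sum.swap)
  also have "\<dots> = (\<Sum>i<l. (V * U) $$ (i,j))"
    using V U j by (intro sum.cong) (auto simp: scalar_prod_def atLeast0LessThan)
  also have "\<dots> = 1" using j by (simp add: VU)
  finally show ?thesis .
qed

text \<open>If A u_j = a + r_j u_j for a basis u_j (the columns of U) and b is the covector with
  b u_j = 1 for all j, then (A - a b^T) u_j = r_j u_j, so
  A - a b^T = U diag(r) V.\<close>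

lemma rank_one_correction_diagonalizes:
  fixes A :: "'a :: field mat"
  assumes A: "A \<in> carrier_mat l l" and U: "U \<in> carrier_mat l l" and V: "V \<in> carrier_mat l l"
    and UV: "U * V = 1\<^sub>m l" and VU: "V * U = 1\<^sub>m l" and a: "a \<in> carrier_vec l"
    and shift: "\<And>j. j < l \<Longrightarrow> A *\<^sub>v col U j = a + r j \<cdot>\<^sub>v col U j"
  shows "similar_mat_wit (A - outer_mat a (vec l (\<lambda>k. \<Sum>i<l. V $$ (i,k)))) (mat_diag l r) U V"
proof -
  define b where "b = vec l (\<lambda>k. \<Sum>i<l. V $$ (i,k))"
  define A' where "A' = A - outer_mat a b"
  have b: "b \<in> carrier_vec l" unfolding b_def by simp
  have A': "A' \<in> carrier_mat l l" unfolding A'_def using A a b by (simp add: minus_carrier_mat)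
  have eigen: "A' *\<^sub>v col U j = r j \<cdot>\<^sub>v col U j" if j: "j < l" for j
  proof (rule eq_vecI)
    fix i assume "i < dim_vec (r j \<cdot>\<^sub>v col U j)"
    hence i: "i < l" using U by simp
    have "(outer_mat a b *\<^sub>v col U j) $ i = a $ i * (b \<bullet> col U j)"
      using a b U i by (simp add: outer_mat_def scalar_prod_def atLeast0LessThan sum_distrib_left
          mult.assoc)
    hence "(outer_mat a b *\<^sub>v col U j) $ i = a $ i"
      using column_sums_of_inverse[OF U V VU j] unfolding b_def by simp
    moreover have "(A *\<^sub>v col U j) $ i = (a + r j \<cdot>\<^sub>v col U j) $ i" using shift[OF j] by simp
    hence "(A *\<^sub>v col U j) $ i = a $ i + r j * U $$ (i,j)" using a U i j by simp
    moreover have "A' *\<^sub>v col U j = A *\<^sub>v col U j - outer_mat a b *\<^sub>v col U j"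
      unfolding A'_def by (rule minus_mult_distrib_mat_vec) (use A a b U in auto)
    ultimately show "(A' *\<^sub>v col U j) $ i = (r j \<cdot>\<^sub>v col U j) $ i"
      using A a b U i j by simp
  qed (use A' U in simp)
  have "A' * U = U * mat_diag l r"
  proof (rule eq_matI)
    fix i j assume "i < dim_row (U * mat_diag l r)" "j < dim_col (U * mat_diag l r)"
    hence ij: "i < l" "j < l" using U by (auto simp: mat_diag_def)
    have "(A' * U) $$ (i,j) = (A' *\<^sub>v col U j) $ i" using A' U ij by simp
    thus "(A' * U) $$ (i,j) = (U * mat_diag l r) $$ (i,j)"
      using eigen[OF ij(2)] U ij by (simp add: mat_diag_mult_right[OF U])
  qed (use A' U in \<open>auto simp: mat_diag_def\<close>)
  hence "A' = U * mat_diag l r * V"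
    using A' U V UV assoc_mult_mat[OF A' U V] by simp
  thus ?thesis unfolding similar_mat_wit_def A'_def[symmetric] b_def[symmetric]
    using A' U V UV VU by (auto simp: Let_def)
qed

lemma cyclic_rank_one_correction:
  fixes A :: "'a :: field mat"
  assumes A: "A \<in> carrier_mat l l" and c: "c \<in> carrier_vec l" and cyc: "cyclic_vector A c"
    and r: "inj_on r {..<l}"
  shows "\<exists>a b U V. a \<in> carrier_vec l \<and> b \<in> carrier_vec l
      \<and> similar_mat_wit (A - outer_mat a b) (mat_diag l r) U V"
proof -
  define U where "U = lagrange_basis A c r"
  have U: "U \<in> carrier_mat l l" unfolding U_def lagrange_basis_def using A by simp
  obtain V where V: "V \<in> carrier_mat l l" "U * V = 1\<^sub>m l" "V * U = 1\<^sub>m l"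
    using det_non_zero_imp_unit[OF U lagrange_basis_invertible[OF A c cyc r, folded U_def], of "()"]
    unfolding Units_def by (auto simp: ring_mat_simps)
  define a where "a = mat_poly_eval (\<Prod>k<l. [:- r k, 1:]) A *\<^sub>v c"
  have a: "a \<in> carrier_vec l" unfolding a_def using A c by simp
  have "A *\<^sub>v col U j = a + r j \<cdot>\<^sub>v col U j" if "j < l" for j
    using lagrange_basis_shift[OF A c that] unfolding U_def a_def .
  hence "similar_mat_wit (A - outer_mat a (vec l (\<lambda>k. \<Sum>i<l. V $$ (i,k)))) (mat_diag l r) U V"
    by (rule rank_one_correction_diagonalizes[OF A U V a])
  moreover have "vec l (\<lambda>k. \<Sum>i<l. V $$ (i,k)) \<in> carrier_vec l" by simp
  ultimately show ?thesis using a by blast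
qed

text \<open>For a nonderogatory A, the correction T = (0; a b^T) has rank at most one,
  (E;A) - T = (E; U diag(0,...,l-1) U^-1) is diagonalizable, and (E;A) = T + (E;A - a b^T)
  has rank at most 1 + l.\<close>

lemma nonderogatory_pencil_rank:
  fixes A :: "'a :: {field_char_0, field_gcd} mat"
  assumes A: "A \<in> carrier_mat l l" and nonderogatory: "minimal_poly A = char_poly A"
  shows "(\<exists>T. T \<in> tensor_carrier l l \<and> tensor_rank l l T \<le> 1
            \<and> tensor_diagonalizable l l (tensor_minus (1\<^sub>m l, A) T))
         \<and> tensor_rank l l (1\<^sub>m l, A) \<le> l + 1"
proof -
  have "degree (minimal_poly A) = l"
    using nonderogatory degree_monic_char_poly[OF A] by simp
  then obtain c where c: "c \<in> carrier_vec l" "cyclic_vector A c"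
    using cyclic_vector_exists[OF A] by blast
  have "inj_on (of_nat :: nat \<Rightarrow> 'a) {..<l}" by (simp add: inj_on_def)
  then obtain a b U V where ab: "a \<in> carrier_vec l" "b \<in> carrier_vec l"
    and sim: "similar_mat_wit (A - outer_mat a b) (mat_diag l of_nat) U V"
    using cyclic_rank_one_correction[OF A c] by blast
  define T where "T = (0 \<cdot>\<^sub>m outer_mat a b, 1 \<cdot>\<^sub>m outer_mat a b)"
  define A' where "A' = A - outer_mat a b"
  have A': "A' \<in> carrier_mat l l" unfolding A'_def using A ab by (simp add: minus_carrier_mat)
  have T: "T \<in> tensor_carrier l l" "tensor_decomposes l l 1 T"
    unfolding T_def tensor_carrier_def using ab outer_tensor_decomposes[OF ab] by auto
  have sim': "similar_mat_wit A' (mat_diag l of_nat) U V" using sim unfolding A'_def .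
  have "tensor_minus (1\<^sub>m l, A) T = (1\<^sub>m l, A')"
    unfolding tensor_minus_def T_def A'_def using A ab by (auto intro!: eq_matI)
  hence diag: "tensor_diagonalizable l l (tensor_minus (1\<^sub>m l, A) T)"
    using similar_diag_pencil_diagonalizable[OF sim' A'] by simp
  have "(1\<^sub>m l, A) = tensor_add T (1\<^sub>m l, A')"
    unfolding tensor_add_def T_def A'_def using A ab by (auto intro!: eq_matI)
  hence "tensor_decomposes l l (1 + l) (1\<^sub>m l, A)"
    using tensor_decomposes_add[OF T(2) similar_diag_pencil_decomposes[OF sim' A']] by simp
  hence "tensor_rank l l (1\<^sub>m l, A) \<le> l + 1" using tensor_rank_le by fastforce
  thus ?thesis using T tensor_rank_le diag by blast
qed

theorem mainTheorem3:
  shows "(\<forall>(l::nat) (A::real mat). A \<in> carrier_mat l l \<and> minimal_poly A = char_poly A \<longrightarrow>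
            (\<exists>T. T \<in> tensor_carrier l l \<and> tensor_rank l l T \<le> 1
                 \<and> tensor_diagonalizable l l (tensor_minus (1\<^sub>m l, A) T))
            \<and> tensor_rank l l (1\<^sub>m l, A) \<le> l + 1)
       \<and> (\<forall>(l::nat) (A::complex mat). A \<in> carrier_mat l l \<and> minimal_poly A = char_poly A \<longrightarrow>
            (\<exists>T. T \<in> tensor_carrier l l \<and> tensor_rank l l T \<le> 1
                 \<and> tensor_diagonalizable l l (tensor_minus (1\<^sub>m l, A) T))
            \<and> tensor_rank l l (1\<^sub>m l, A) \<le> l + 1)"
  using nonderogatory_pencil_rank[where 'a = real] nonderogatory_pencil_rank[where 'a = complex]
  by blast

end
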